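(* Let $v,a,b,c\in\mathbb{C}$ with $\Re(v)<3$, $\Re(c)>0$, and $\Re(vc+a+b)>0$, $\Re(vc+a-b)>0$, $\Re(vc-a+b)>0$, $\Re(vc-a-b)>0$. Put $\sigma_3=\frac v2-\frac{a}{2c}-\frac{b}{2c}$, $\sigma_4=\frac v2-\frac{a}{2c}+\frac{b}{2c}$, $\sigma_5=\frac v2+\frac{a}{2c}+\frac{b}{2c}$, $\sigma_6=\frac v2+\frac{a}{2c}-\frac{b}{2c}$, $P=(vc-a-b)(vc+a+b)(vc-a+b)(vc+a-b)$, and assume $\frac v2\notin\mathbb{Z}_0^-$, $1+\sigma_j\notin\mathbb{Z}_0^-$ ($j=3,4,5,6$). Then $$ \int_0^\infty\frac{\sinh(ax)\sinh(bx)}{\sinh^{v}(cx)}\,dx=\frac{2^{v+1}\,v\,a\,b\,c}{P}\;{}_6F_5\!\left(\begin{matrix}v,\ 1+\frac v2,\ \sigma_3,\ \sigma_5,\ \sigma_4,\ \sigma_6\\ \frac v2,\ 1+\sigma_3,\ 1+\sigma_5,\ 1+\sigma_4,\ 1+\sigma_6\end{matrix};\,1\right). $$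
   Context: $\mathbb{Z}_0^-=\{0,-1,-2,\dots\}$. The Pochhammer symbol is $(\lambda)_0=1$, $(\lambda)_n=\lambda(\lambda+1)\cdots(\lambda+n-1)$ for $n\ge1$. The generalized hypergeometric series is ${}_pF_q\!\left(\begin{matrix}\alpha_1,\dots,\alpha_p\\ \beta_1,\dots,\beta_q\end{matrix};z\right)=\sum_{n=0}^\infty\frac{(\alpha_1)_n\cdots(\alpha_p)_n}{(\beta_1)_n\cdots(\beta_q)_n}\frac{z^n}{n!}$ (with no $\beta_j\in\mathbb{Z}_0^-$); when $p=q+1$ and $z=1$ it converges if $\Re(\sum\beta_j-\sum\alpha_i)>0$. For $\Re(c)>0$ and $x>0$, the complex power $\sinh^{v}(cx)$ means $2^{-v}e^{vcx}(1-e^{-2cx})^{v}$, with the principal branch of $(1-e^{-2cx})^{v}$ (this agrees with the ordinary real power when $c>0$ and $v$ is real). *)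

theory Defs
  imports "HOL-Analysis.Analysis" "HOL-Library.Nonpos_Ints"
begin

definition hypergeom :: "complex list \<Rightarrow> complex list \<Rightarrow> complex \<Rightarrow> complex" where
  "hypergeom as bs z =
     (\<Sum>n. (\<Prod>a\<leftarrow>as. pochhammer a n) / (\<Prod>b\<leftarrow>bs. pochhammer b n) * z ^ n / fact n)"

text \<open>Complex power sinh(cx)^v := 2^(-v) e^(vcx) (1 - e^(-2cx))^v, principal branch.\<close>
definition sinh_pow :: "complex \<Rightarrow> complex \<Rightarrow> real \<Rightarrow> complex" where
  "sinh_pow v c x = 2 powr (-v) * exp (v * c * of_real x) * (1 - exp (-2 * c * of_real x)) powr v"

end

theory Submission
  imports Defs
begin

text \<open>Writing \<open>q = exp (-2cx)\<close>, the binomial series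
\<open>sinh(cx)^(-v) = 2^v exp (-vcx) (1 - q)^(-v) = 2^v \<Sum>\<^sub>k (v)\<^sub>k / k! exp (-(v + 2k)cx)\<close>
reduces the integral to the Laplace transforms
\<open>\<integral>\<^sub>0\<^sup>\<infinity> sinh(ax) sinh(bx) exp (-wx) dx = 2abw / ((w-a-b)(w+a+b)(w-a+b)(w+a-b))\<close>
at \<open>w = (v + 2k)c\<close>. Termwise integration is justified by
\<open>|sinh(ax) sinh(bx)| \<le> |a| |b| x^2 exp ((|Re a| + |Re b|) x)\<close>: the \<open>k\<close>-th term then has
\<open>L\<^sup>1\<close> norm \<open>O(|(v)\<^sub>k / k!| / k^3) = O(k^(Re v - 4))\<close>, summable because \<open>Re v < 3\<close>.
Finally \<open>(v + 2k)/v\<close> and the factors \<open>\<sigma>/(\<sigma> + k)\<close> are quotients of Pochhammer symbols,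
which turns the resulting series into the very-well-poised \<open>\<^sub>6F\<^sub>5\<close>.\<close>

lemma norm_cosh_le: "norm (cosh z) \<le> exp \<bar>Re z\<bar>" for z :: complex
proof -
  have "norm (cosh z) = norm (exp z + exp (-z)) / 2"
    by (simp add: cosh_field_def norm_divide)
  also have "\<dots> \<le> (norm (exp z) + norm (exp (-z))) / 2"
    by (intro divide_right_mono norm_triangle_ineq) auto
  also have "\<dots> = (exp (Re z) + exp (- Re z)) / 2"
    by (simp add: norm_exp_eq_Re)
  also have "\<dots> \<le> exp \<bar>Re z\<bar>"
    by (cases "Re z \<ge> 0") auto
  finally show ?thesis .
qed

lemma norm_sinh_le: "norm (sinh z) \<le> exp \<bar>Re z\<bar> * norm z" for z :: complex
proof -
  have "norm (sinh z - sinh 0) \<le> exp \<bar>Re z\<bar> * norm (z - 0)"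
  proof (rule field_differentiable_bound[where S = "closed_segment 0 z" and f' = cosh])
    fix w assume "w \<in> closed_segment 0 z"
    then obtain u :: real where "0 \<le> u" "u \<le> 1" "w = u *\<^sub>R z"
      by (auto simp: in_segment)
    then have "\<bar>Re w\<bar> \<le> \<bar>Re z\<bar>"
      by (simp add: abs_mult mult_left_le_one_le)
    then show "norm (cosh w) \<le> exp \<bar>Re z\<bar>"
      using norm_cosh_le[of w] by (meson exp_le_cancel_iff order_trans)
    show "(sinh has_field_derivative cosh w) (at w within closed_segment 0 z)"
      by (auto intro!: derivative_eq_intros)
  qed auto
  then show ?thesis by simp
qed

lemma has_integral_exp_neg_real:
  fixes r :: real assumes "r > 0"
  shows "((\<lambda>x. exp (- (r * x))) has_integral 1 / r) {0<..}"
proof -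
  have "((\<lambda>x. exp (- (r * x))) has_integral 1 / r) {0..}"
    using has_integral_exp_minus_to_infinity[OF assms, of 0] by simp
  moreover have "((\<lambda>x. exp (- (r * x))) has_integral 1 / r) {0..} \<longleftrightarrow> ?thesis"
    by (rule has_integral_spike_set_eq; rule negligible_subset[of "{0}"]) auto
  ultimately show ?thesis by blast
qed

lemma set_integral_exp_neg_real:
  fixes r :: real assumes "r > 0"
  shows "set_integrable lebesgue {0<..} (\<lambda>x. exp (- (r * x)))"
    and "(LINT x:{0<..}|lebesgue. exp (- (r * x))) = 1 / r"
proof -
  show integrable: "set_integrable lebesgue {0<..} (\<lambda>x. exp (- (r * x)))"
    using has_integral_exp_neg_real[OF assms]
    by (intro nonnegative_absolutely_integrable_1) (auto simp: integrable_on_def)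
  show "(LINT x:{0<..}|lebesgue. exp (- (r * x))) = 1 / r"
    using has_integral_exp_neg_real[OF assms] set_lebesgue_integral_eq_integral(2)[OF integrable]
    by (simp add: integral_unique)
qed

lemma absolutely_integrable_exp_neg:
  fixes u :: complex assumes "Re u > 0"
  shows "(\<lambda>x::real. exp (- (u * of_real x))) absolutely_integrable_on {0<..}"
proof (rule measurable_bounded_by_integrable_imp_absolutely_integrable)
  show "(\<lambda>x::real. exp (- (u * of_real x))) \<in> borel_measurable (lebesgue_on {0<..})"
    by (intro continuous_imp_measurable_on_sets_lebesgue continuous_intros) auto
  show "(\<lambda>x. exp (- (Re u * x))) integrable_on {0<..}"
    using has_integral_exp_neg_real[OF assms] by blast
  show "norm (exp (- (u * of_real x))) \<le> exp (- (Re u * x))" for x :: real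
    by (simp add: norm_exp_eq_Re)
qed auto

lemma tendsto_exp_neg_at_top:
  fixes u :: complex assumes "Re u > 0"
  shows "((\<lambda>x::real. exp (- (u * of_real x))) \<longlongrightarrow> 0) at_top"
proof (rule tendsto_norm_zero_cancel)
  have "filterlim (\<lambda>x. Re u * x) at_top at_top"
    using assms by (intro filterlim_tendsto_pos_mult_at_top[OF tendsto_const _ filterlim_ident])
  then have "filterlim (\<lambda>x. - (Re u * x)) at_bot at_top"
    by (simp add: filterlim_uminus_at_top)
  then show "((\<lambda>x. norm (exp (- (u * of_real x)))) \<longlongrightarrow> 0) at_top"
    by (simp add: filterlim_compose[OF exp_at_bot])
qed

lemma has_integral_exp_neg:
  fixes u :: complex assumes u: "Re u > 0"
  shows "((\<lambda>x::real. exp (- (u * of_real x))) has_integral 1 / u) {0<..}"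
proof -
  let ?f = "\<lambda>x::real. exp (- (u * of_real x))"
  let ?F = "\<lambda>x::real. - exp (- (u * of_real x)) / u"
  have u0: "u \<noteq> 0" using u by auto
  have einterval: "einterval 0 \<infinity> = {0::real<..}"
    by (auto simp: einterval_def zero_ereal_def)
  have integrable: "set_integrable lborel {0::real<..} ?f"
    using absolutely_integrable_exp_neg[OF u]
    by (simp add: set_integrable_def integrable_completion)
  have "(LBINT x=0..\<infinity>. ?f x) = 0 - (- 1 / u)"
  proof (rule interval_integral_FTC_integrable[where F = ?F])
    show "(?F has_vector_derivative ?f x) (at x)" for x
    proof (rule has_vector_derivative_real_field)
      show "((\<lambda>z. - exp (- (u * z)) / u) has_field_derivative ?f x) (at (of_real x))"
        using u0 by (auto intro!: derivative_eq_intros simp: field_simps)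
    qed
    have "(?F \<longlongrightarrow> ?F 0) (at_right 0)"
      by (intro tendsto_intros continuous_intros) (use u0 in auto)
    then show "((?F \<circ> real_of_ereal) \<longlongrightarrow> - 1 / u) (at_right 0)"
      by (simp add: zero_ereal_def ereal_tendsto_simps1)
    have "(?f \<longlongrightarrow> 0) at_top"
      by (rule tendsto_exp_neg_at_top[OF u])
    then have "(?F \<longlongrightarrow> - 0 / u) at_top"
      using u0 by (intro tendsto_intros)
    then show "((?F \<circ> real_of_ereal) \<longlongrightarrow> 0) (at_left \<infinity>)"
      by (simp add: ereal_tendsto_simps1)
  qed (use integrable einterval in \<open>auto intro!: continuous_intros\<close>)
  moreover have "(LBINT x=0..\<infinity>. ?f x) = integral {0<..} ?f"
    using integrable
    by (simp add: zero_ereal_def interval_integral_to_infinity_eq set_borel_integral_eq_integral)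
  moreover have "?f integrable_on {0<..}"
    using integrable by (simp add: set_borel_integral_eq_integral)
  ultimately show ?thesis
    by (simp add: has_integral_integrable_integral)
qed

definition sinh_sinh_laplace :: "complex \<Rightarrow> complex \<Rightarrow> complex \<Rightarrow> complex" where
  "sinh_sinh_laplace a b w = 2 * a * b * w / ((w - a - b) * (w + a + b) * (w - a + b) * (w + a - b))"

lemma sinh_mult_sinh_exp_eq:
  "sinh (a * x) * sinh (b * x) * exp (- (w * x)) =
     (exp (- ((w - a - b) * x)) + exp (- ((w + a + b) * x))
       - exp (- ((w - a + b) * x)) - exp (- ((w + a - b) * x))) / 4"
  for a b w x :: complex
  by (simp add: sinh_field_def field_simps flip: exp_add exp_diff)

lemma
  fixes a b w :: complex
  assumes "Re (w - a - b) > 0" "Re (w + a + b) > 0" "Re (w - a + b) > 0" "Re (w + a - b) > 0"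
  shows has_integral_sinh_mult_sinh_exp:
      "((\<lambda>x::real. sinh (a * x) * sinh (b * x) * exp (- (w * x)))
         has_integral sinh_sinh_laplace a b w) {0<..}"
    and absolutely_integrable_sinh_mult_sinh_exp:
      "(\<lambda>x::real. sinh (a * x) * sinh (b * x) * exp (- (w * x))) absolutely_integrable_on {0<..}"
proof -
  have nonzero: "w - a - b \<noteq> 0" "w + a + b \<noteq> 0" "w - a + b \<noteq> 0" "w + a - b \<noteq> 0"
    using assms by (metis zero_complex.sel(1) less_irrefl)+
  have partial_fractions: "1/p + 1/q - 1/r - 1/t = (q*r*t + p*r*t - p*q*t - p*q*r) / (p*q*r*t)"
    if "p \<noteq> 0" "q \<noteq> 0" "r \<noteq> 0" "t \<noteq> 0" for p q r t :: complex
    using that by (simp add: field_simps)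
  have numerator: "(w+a+b)*(w-a+b)*(w+a-b) + (w-a-b)*(w-a+b)*(w+a-b)
      - (w-a-b)*(w+a+b)*(w+a-b) - (w-a-b)*(w+a+b)*(w-a+b) = 4 * (2*a*b*w)"
    by algebra
  have "(1 / (w - a - b) + 1 / (w + a + b) - 1 / (w - a + b) - 1 / (w + a - b)) / 4
      = sinh_sinh_laplace a b w"
    unfolding partial_fractions[OF nonzero] numerator sinh_sinh_laplace_def
    by (simp only: divide_divide_eq_left mult.commute[of _ 4] mult_divide_mult_cancel_left_if) simp
  moreover have "((\<lambda>x::real. sinh (a * x) * sinh (b * x) * exp (- (w * x))) has_integral
      (1 / (w - a - b) + 1 / (w + a + b) - 1 / (w - a + b) - 1 / (w + a - b)) / 4) {0<..}"
    unfolding sinh_mult_sinh_exp_eq using assms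
    by (intro has_integral_divide has_integral_add has_integral_diff has_integral_exp_neg)
  ultimately show "((\<lambda>x::real. sinh (a * x) * sinh (b * x) * exp (- (w * x)))
         has_integral sinh_sinh_laplace a b w) {0<..}"
    by simp
  show "(\<lambda>x::real. sinh (a * x) * sinh (b * x) * exp (- (w * x))) absolutely_integrable_on {0<..}"
    unfolding sinh_mult_sinh_exp_eq using assms
    by (intro set_integrable_divide set_integral_add(1) set_integral_diff(1) absolutely_integrable_exp_neg)
qed

lemma norm_sinh_mult_sinh_exp_le:
  fixes a b w :: complex and x :: real assumes x: "x \<ge> 0"
  shows "norm (sinh (a * x) * sinh (b * x) * exp (- (w * x)))
     \<le> norm a * norm b * (x^2 * exp (- ((Re w - \<bar>Re a\<bar> - \<bar>Re b\<bar>) * x)))"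
proof -
  have "norm (sinh (a * x) * sinh (b * x) * exp (- (w * x)))
      = norm (sinh (a * x)) * norm (sinh (b * x)) * exp (- (Re w * x))"
    by (simp add: norm_mult)
  also have "\<dots> \<le> (exp (\<bar>Re a\<bar> * x) * (norm a * x)) * (exp (\<bar>Re b\<bar> * x) * (norm b * x)) * exp (- (Re w * x))"
    using norm_sinh_le[of "a * x"] norm_sinh_le[of "b * x"] x
    by (intro mult_right_mono mult_mono) (auto simp: abs_mult norm_mult)
  also have "\<dots> = norm a * norm b * (x^2 * exp (- ((Re w - \<bar>Re a\<bar> - \<bar>Re b\<bar>) * x)))"
    by (simp add: power2_eq_square algebra_simps flip: exp_add)
  finally show ?thesis .
qed

lemma power2_mult_exp_neg_le:
  fixes l x :: real assumes "l > 0" "x \<ge> 0"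
  shows "x^2 * exp (- (l * x)) \<le> 16 / l^2 * exp (- (l / 2 * x))"
proof -
  define t where "t = l * x / 2"
  have "t \<ge> 0" using assms by (simp add: t_def)
  then have "t^2 / 4 \<le> (1 + t / 2)^2"
    by (simp add: power2_eq_square field_simps)
  also have "\<dots> \<le> exp (t / 2)^2"
    using \<open>t \<ge> 0\<close> by (intro power_mono exp_ge_add_one_self) auto
  also have "\<dots> = exp t"
    by (simp add: power2_eq_square flip: exp_add)
  finally have "x^2 \<le> 16 / l^2 * exp (l / 2 * x)"
    using assms by (simp add: t_def power_mult_distrib field_simps)
  then have "x^2 * exp (- (l * x)) \<le> 16 / l^2 * exp (l / 2 * x) * exp (- (l * x))"
    by (intro mult_right_mono) auto
  also have "\<dots> = 16 / l^2 * exp (- (l / 2 * x))"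
    by (simp add: mult.assoc flip: exp_add)
  finally show ?thesis .
qed

lemma set_integral_norm_sinh_mult_sinh_exp_le:
  fixes a b w :: complex
  defines "l \<equiv> Re w - \<bar>Re a\<bar> - \<bar>Re b\<bar>"
  assumes l: "l > 0"
  shows "(LINT x:{0::real<..}|lebesgue. norm (sinh (a * x) * sinh (b * x) * exp (- (w * x))))
      \<le> 32 * norm a * norm b / l^3"
proof -
  let ?g = "\<lambda>x::real. norm a * norm b * (16 / l^2 * exp (- (l / 2 * x)))"
  have "Re (w - a - b) > 0" "Re (w + a + b) > 0" "Re (w - a + b) > 0" "Re (w + a - b) > 0"
    using l unfolding l_def by auto
  then have "set_integrable lebesgue {0<..}
      (\<lambda>x::real. norm (sinh (a * x) * sinh (b * x) * exp (- (w * x))))"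
    by (intro set_integrable_norm absolutely_integrable_sinh_mult_sinh_exp)
  moreover have "set_integrable lebesgue {0<..} ?g"
    using l by (intro set_integrable_mult_right set_integral_exp_neg_real(1)) auto
  moreover have "norm (sinh (a * x) * sinh (b * x) * exp (- (w * x))) \<le> ?g x" if "x > 0" for x :: real
  proof -
    have "norm (sinh (a * x) * sinh (b * x) * exp (- (w * x))) \<le> norm a * norm b * (x^2 * exp (- (l * x)))"
      using norm_sinh_mult_sinh_exp_le[of x a b w] that unfolding l_def by simp
    also have "\<dots> \<le> ?g x"
      using that by (intro mult_left_mono power2_mult_exp_neg_le l) auto
    finally show ?thesis .
  qed
  ultimately have "(LINT x:{0::real<..}|lebesgue. norm (sinh (a * x) * sinh (b * x) * exp (- (w * x))))
      \<le> (LINT x:{0<..}|lebesgue. ?g x)"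
    by (intro set_integral_mono) auto
  also have "(LINT x:{0<..}|lebesgue. ?g x) = norm a * norm b * (16 / l^2 * (1 / (l / 2)))"
    using set_integral_exp_neg_real(2)[of "l / 2"] l by simp
  also have "\<dots> = 32 * norm a * norm b / l^3"
    using l by (simp add: power2_eq_square power3_eq_cube)
  finally show ?thesis .
qed

lemma norm_pochhammer_div_fact_le:
  fixes v :: complex
  obtains B where "B > 0"
    and "\<And>n. n \<ge> 1 \<Longrightarrow> norm (pochhammer v (Suc n) / fact (Suc n)) \<le> B * real n powr (Re v - 1)"
proof -
  \<comment> \<open>\<open>rGamma_series v n = (v)\<^sub>n\<^sub>+\<^sub>1 / (n! n\<^sup>v)\<close> converges (to \<open>1/\<Gamma>(v)\<close>), hence is bounded.\<close>
  have "Bseq (rGamma_series v)"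
    using rGamma_series_LIMSEQ by (intro convergent_imp_Bseq) (auto simp: convergent_def)
  then obtain B where B: "B > 0" "\<And>n. norm (rGamma_series v n) \<le> B"
    by (auto elim: BseqE)
  have "norm (pochhammer v (Suc n) / fact (Suc n)) \<le> B * real n powr (Re v - 1)"
    if n: "n \<ge> 1" for n
  proof -
    have "pochhammer v (Suc n) / fact (Suc n) =
        rGamma_series v n * exp (v * of_real (ln (real n))) / of_nat (Suc n)"
      by (simp add: rGamma_series_def field_simps fact_Suc del: of_nat_Suc)
    also have "norm \<dots> = norm (rGamma_series v n) * real n powr Re v / real (Suc n)"
      using n by (simp add: norm_divide norm_mult powr_def del: of_nat_Suc)
    also have "\<dots> \<le> B * real n powr Re v / real n"
      using B n by (intro frac_le mult_right_mono) auto
    also have "\<dots> = B * real n powr (Re v - 1)"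
      using n by (simp add: powr_diff)
    finally show ?thesis .
  qed
  with B(1) that show ?thesis by blast
qed

lemma summable_norm_pochhammer_div_fact_div_cube:
  fixes v :: complex and \<mu> \<gamma> :: real
  assumes "Re v < 3" "\<mu> > 0" "\<gamma> > 0"
  shows "summable (\<lambda>k. norm (pochhammer v k / fact k) / (\<mu> + \<gamma> * real k) ^ 3)"
proof -
  obtain B where B: "B > 0"
    "\<And>n. n \<ge> 1 \<Longrightarrow> norm (pochhammer v (Suc n) / fact (Suc n)) \<le> B * real n powr (Re v - 1)"
    using norm_pochhammer_div_fact_le[of v] by blast
  have majorant: "summable (\<lambda>n. B / \<gamma>^3 * real n powr (Re v - 4))"
    using assms by (intro summable_mult) (simp add: summable_real_powr_iff)
  have bound: "norm (norm (pochhammer v (Suc n) / fact (Suc n)) / (\<mu> + \<gamma> * real (Suc n)) ^ 3)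
      \<le> B / \<gamma>^3 * real n powr (Re v - 4)" if n: "n \<ge> 1" for n
  proof -
    have "norm (norm (pochhammer v (Suc n) / fact (Suc n)) / (\<mu> + \<gamma> * real (Suc n)) ^ 3)
        = norm (pochhammer v (Suc n) / fact (Suc n)) / (\<mu> + \<gamma> * real (Suc n)) ^ 3"
      using assms by simp
    also have "\<dots> \<le> B * real n powr (Re v - 1) / (\<gamma> * real n) ^ 3"
      using assms n B by (intro frac_le power_mono) (auto simp: algebra_simps)
    also have "\<dots> = B / \<gamma>^3 * (real n powr (Re v - 1) / real n powr 3)"
      using n by (simp add: powr_realpow power_mult_distrib)
    also have "real n powr (Re v - 1) / real n powr 3 = real n powr (Re v - 4)"
      unfolding powr_diff[symmetric] by simp
    finally show ?thesis .
  qed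
  have "summable (\<lambda>n. norm (pochhammer v (Suc n) / fact (Suc n)) / (\<mu> + \<gamma> * real (Suc n)) ^ 3)"
    using eventually_mono[OF eventually_ge_at_top[of 1] bound] majorant
    by (rule summable_comparison_test_ev)
  then show ?thesis
    by (subst summable_Suc_iff[symmetric])
qed

lemma pochhammer_binomial_series:
  fixes v z :: complex assumes "norm z < 1"
  shows "(\<lambda>k. pochhammer v k / fact k * z ^ k) sums (1 - z) powr (- v)"
    and "summable (\<lambda>k. norm (pochhammer v k / fact k * z ^ k))"
proof -
  have gchoose: "((- v) gchoose k) * (- z) ^ k = pochhammer v k / fact k * z ^ k" for k
  proof -
    have "((- v) gchoose k) * (- z) ^ k = ((-1)^k * (-1)^k) * (pochhammer v k / fact k * z ^ k)"
      unfolding gbinomial_pochhammer power_minus[of z] by simp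
    also have "(-1::complex)^k * (-1)^k = 1"
      by (simp flip: power_mult_distrib)
    finally show ?thesis by simp
  qed
  show "(\<lambda>k. pochhammer v k / fact k * z ^ k) sums (1 - z) powr (- v)"
    using gen_binomial_complex[of "- z" "- v"] assms by (simp add: gchoose)
  have "ereal (norm (- z)) < conv_radius (\<lambda>k. (- v) gchoose k)"
    using assms by (simp add: conv_radius_gchoose one_ereal_def)
  then have "summable (\<lambda>k. norm (((- v) gchoose k) * (- z) ^ k))"
    by (rule abs_summable_in_conv_radius)
  then show "summable (\<lambda>k. norm (pochhammer v k / fact k * z ^ k))"
    by (simp only: gchoose)
qed

lemma inverse_sinh_pow_series:
  fixes v c :: complex and x :: real
  assumes "Re c > 0" "x > 0"
  defines "t \<equiv> \<lambda>k. 2 powr v * (pochhammer v k / fact k) * exp (- ((v + 2 * of_nat k) * c * x))"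
  shows "t sums inverse (sinh_pow v c x)" and "summable (\<lambda>k. norm (t k))"
proof -
  define q where "q = exp (-2 * c * x)"
  define C where "C = 2 powr v * exp (- (v * c * x))"
  have "norm q < 1"
    using assms by (simp add: q_def)
  have t: "t k = C * (pochhammer v k / fact k * q ^ k)" for k
    by (simp add: t_def C_def q_def algebra_simps flip: exp_of_nat_mult exp_add)
  have inverse_eq: "inverse (sinh_pow v c x) = C * (1 - q) powr (- v)"
    by (simp add: sinh_pow_def C_def q_def powr_minus exp_minus inverse_mult_distrib)
  show "t sums inverse (sinh_pow v c x)"
    unfolding t inverse_eq by (intro sums_mult pochhammer_binomial_series(1) \<open>norm q < 1\<close>)
  show "summable (\<lambda>k. norm (t k))"
    unfolding t norm_mult[of C]
    by (intro summable_mult pochhammer_binomial_series(2) \<open>norm q < 1\<close>)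
qed

lemma absolutely_integrable_suminf:
  fixes f :: "nat \<Rightarrow> 'a::euclidean_space \<Rightarrow> 'b::euclidean_space"
  assumes integrable: "\<And>k. f k absolutely_integrable_on S"
    and sums: "\<And>x. x \<in> S \<Longrightarrow> (\<lambda>k. f k x) sums F x"
    and summable_pointwise: "\<And>x. x \<in> S \<Longrightarrow> summable (\<lambda>k. norm (f k x))"
    and summable_integrals: "summable (\<lambda>k. LINT x:S|lebesgue. norm (f k x))"
  shows "F absolutely_integrable_on S"
    and "(\<lambda>k. integral S (f k)) sums integral S F"
proof -
  define g where "g = (\<lambda>k x. indicator S x *\<^sub>R f k x)"
  have g_integrable: "integrable lebesgue (g k)" for k
    using integrable[of k] by (simp add: g_def set_integrable_def)
  have summable_g: "summable (\<lambda>k. norm (g k x))" for x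
    using summable_pointwise[of x] by (cases "x \<in> S") (simp_all add: g_def)
  have summable_integrals_g: "summable (\<lambda>k. \<integral>x. norm (g k x) \<partial>lebesgue)"
    using summable_integrals
    by (simp add: g_def set_lebesgue_integral_def norm_scaleR)
  have suminf_g: "(\<lambda>x. \<Sum>k. g k x) = (\<lambda>x. indicator S x *\<^sub>R F x)"
    using sums by (auto simp: g_def fun_eq_iff sums_iff indicator_def)
  have "integrable lebesgue (\<lambda>x. \<Sum>k. g k x)"
    by (rule integrable_suminf[OF g_integrable AE_I2[OF summable_g] summable_integrals_g])
  moreover have "(\<lambda>k. integral\<^sup>L lebesgue (g k)) sums (\<integral>x. (\<Sum>k. g k x) \<partial>lebesgue)"
    by (rule sums_integral[OF g_integrable AE_I2[OF summable_g] summable_integrals_g])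
  ultimately have "integrable lebesgue (\<lambda>x. indicator S x *\<^sub>R F x)"
    and sums_g: "(\<lambda>k. integral\<^sup>L lebesgue (g k)) sums (\<integral>x. indicator S x *\<^sub>R F x \<partial>lebesgue)"
    unfolding suminf_g .
  then show "F absolutely_integrable_on S"
    by (simp add: set_integrable_def)
  have "integral\<^sup>L lebesgue (g k) = integral S (f k)" for k
    using set_lebesgue_integral_eq_integral(2)[OF integrable[of k]]
    by (simp add: g_def set_lebesgue_integral_def)
  moreover have "(\<integral>x. indicator S x *\<^sub>R F x \<partial>lebesgue) = integral S F"
    using set_lebesgue_integral_eq_integral(2) \<open>F absolutely_integrable_on S\<close>
    by (simp add: set_lebesgue_integral_def)
  ultimately show "(\<lambda>k. integral S (f k)) sums integral S F"
    using sums_g by simp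
qed

lemma summable_set_integral_norm_sinh_mult_sinh_exp_series:
  fixes v a b c :: complex
  assumes "Re v < 3" "Re c > 0" "\<bar>Re a\<bar> + \<bar>Re b\<bar> < Re (v * c)"
  shows "summable (\<lambda>k. LINT x:{0::real<..}|lebesgue. norm (2 powr v * (pochhammer v k / fact k)
           * (sinh (a * x) * sinh (b * x) * exp (- ((v + 2 * of_nat k) * c * x)))))"
    (is "summable ?I")
proof (rule summable_comparison_test')
  define \<mu> where "\<mu> = Re (v * c) - \<bar>Re a\<bar> - \<bar>Re b\<bar>"
  have "\<mu> > 0"
    using assms(3) by (simp add: \<mu>_def)
  show "summable (\<lambda>k. norm (2 powr v) * (32 * norm a * norm b)
      * (norm (pochhammer v k / fact k) / (\<mu> + 2 * Re c * real k) ^ 3))"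
    using assms(1,2) \<open>\<mu> > 0\<close> by (intro summable_mult summable_norm_pochhammer_div_fact_div_cube) auto
  fix k
  have Re_w: "Re ((v + 2 * of_nat k) * c) - \<bar>Re a\<bar> - \<bar>Re b\<bar> = \<mu> + 2 * Re c * real k"
    by (simp add: \<mu>_def algebra_simps)
  have "?I k = norm (2 powr v) * norm (pochhammer v k / fact k) * (LINT x:{0::real<..}|lebesgue.
          norm (sinh (a * x) * sinh (b * x) * exp (- ((v + 2 * of_nat k) * c * x))))"
    by (simp only: norm_mult[of "2 powr v * (pochhammer v k / fact k)"] norm_mult[of "2 powr v"]
        set_integral_mult_right)
  also have "\<dots> \<le> norm (2 powr v) * norm (pochhammer v k / fact k)
      * (32 * norm a * norm b / (\<mu> + 2 * Re c * real k) ^ 3)"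
    using set_integral_norm_sinh_mult_sinh_exp_le[of "(v + 2 * of_nat k) * c" a b]
      \<open>\<mu> > 0\<close> assms(2) unfolding Re_w
    by (intro mult_left_mono) (auto simp: add_pos_nonneg)
  also have "\<dots> = norm (2 powr v) * (32 * norm a * norm b)
      * (norm (pochhammer v k / fact k) / (\<mu> + 2 * Re c * real k) ^ 3)"
    by (simp add: times_divide_eq_right mult_ac)
  finally have "?I k \<le> \<dots>" .
  moreover have "?I k \<ge> 0"
    by (simp add: set_lebesgue_integral_def Bochner_Integration.integral_nonneg)
  ultimately show "norm (?I k) \<le> norm (2 powr v) * (32 * norm a * norm b)
      * (norm (pochhammer v k / fact k) / (\<mu> + 2 * Re c * real k) ^ 3)"
    by simp
qed

lemma sinh_mult_sinh_div_sinh_pow_series: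
  fixes v a b c :: complex
  assumes "Re v < 3" "Re c > 0" "\<bar>Re a\<bar> + \<bar>Re b\<bar> < Re (v * c)"
  defines "F \<equiv> \<lambda>x::real. sinh (a * x) * sinh (b * x) / sinh_pow v c x"
  shows "F absolutely_integrable_on {0<..}"
    and "(\<lambda>k. 2 powr v * (pochhammer v k / fact k) * sinh_sinh_laplace a b ((v + 2 * of_nat k) * c))
           sums integral {0<..} F"
proof -
  define w where "w k = (v + 2 * of_nat k) * c" for k :: nat
  define p where "p k = 2 powr v * (pochhammer v k / fact k)" for k :: nat
  define f where "f k x = p k * (sinh (a * x) * sinh (b * x) * exp (- (w k * x)))" for k and x :: real
  have Re_w: "Re (w k) \<ge> Re (v * c)" for k
    using assms(2) by (simp add: w_def algebra_simps)
  have w_pos: "Re (w k - a - b) > 0" "Re (w k + a + b) > 0" "Re (w k - a + b) > 0" "Re (w k + a - b) > 0"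
    for k
    using Re_w[of k] assms(3) abs_ge_self[of "Re a"] abs_ge_minus_self[of "Re a"]
      abs_ge_self[of "Re b"] abs_ge_minus_self[of "Re b"]
    by simp_all
  have integrable: "f k absolutely_integrable_on {0<..}" for k
    unfolding f_def by (intro set_integrable_mult_right absolutely_integrable_sinh_mult_sinh_exp w_pos)
  have integral: "integral {0<..} (f k) = p k * sinh_sinh_laplace a b (w k)" for k
    unfolding f_def using integral_unique[OF has_integral_sinh_mult_sinh_exp[OF w_pos]] by simp
  have pointwise: "(\<lambda>k. f k x) sums F x" "summable (\<lambda>k. norm (f k x))" if "x \<in> {0<..}" for x :: real
  proof -
    from that have "x > 0" by simp
    have f: "f k x = sinh (a * x) * sinh (b * x)
        * (2 powr v * (pochhammer v k / fact k) * exp (- ((v + 2 * of_nat k) * c * x)))" for k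
      by (simp add: f_def p_def w_def mult_ac)
    show "(\<lambda>k. f k x) sums F x"
      unfolding f F_def divide_inverse[of "sinh (a * of_real x) * sinh (b * of_real x)"]
      by (intro sums_mult inverse_sinh_pow_series(1) assms(2) \<open>x > 0\<close>)
    show "summable (\<lambda>k. norm (f k x))"
      unfolding f norm_mult[of "sinh (a * x) * sinh (b * x)"]
      by (intro summable_mult inverse_sinh_pow_series(2) assms(2) \<open>x > 0\<close>)
  qed
  have "summable (\<lambda>k. LINT x:{0<..}|lebesgue. norm (f k x))"
    using summable_set_integral_norm_sinh_mult_sinh_exp_series[OF assms(1-3)]
    by (simp only: f_def p_def w_def)
  note series = absolutely_integrable_suminf[OF integrable pointwise this]
  show "F absolutely_integrable_on {0<..}"
    by (rule series(1))
  show "(\<lambda>k. 2 powr v * (pochhammer v k / fact k) * sinh_sinh_laplace a b ((v + 2 * of_nat k) * c))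
           sums integral {0<..} F"
    using series(2) by (simp only: integral p_def w_def)
qed

definition hypergeom_term :: "complex list \<Rightarrow> complex list \<Rightarrow> complex \<Rightarrow> nat \<Rightarrow> complex" where
  "hypergeom_term as bs z n =
     (\<Prod>a\<leftarrow>as. pochhammer a n) / (\<Prod>b\<leftarrow>bs. pochhammer b n) * z ^ n / fact n"

lemma hypergeom_eq_suminf: "hypergeom as bs z = (\<Sum>n. hypergeom_term as bs z n)"
  by (simp add: hypergeom_def hypergeom_term_def)

lemma pochhammer_mult_plus_eq:
  fixes s :: "'a::comm_semiring_1"
  shows "pochhammer s n * (s + of_nat n) = s * pochhammer (1 + s) n"
  using pochhammer_rec[of s n] pochhammer_rec'[of s n] by (simp add: add.commute mult.commute)

lemma pochhammer_div_pochhammer_1_plus: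
  fixes s :: complex
  assumes "s + of_nat n \<noteq> 0" "pochhammer (1 + s) n \<noteq> 0"
  shows "pochhammer s n / pochhammer (1 + s) n = s / (s + of_nat n)"
  using pochhammer_mult_plus_eq[of s n] assms by (simp add: field_simps)

lemma pochhammer_1_plus_div_pochhammer:
  fixes s :: complex
  assumes "s \<noteq> 0" "pochhammer s n \<noteq> 0"
  shows "pochhammer (1 + s) n / pochhammer s n = (s + of_nat n) / s"
  using pochhammer_mult_plus_eq[of s n] assms by (simp add: field_simps)

lemma hypergeom_term_well_poised:
  fixes v :: complex and ss :: "complex list"
  assumes "v / 2 \<notin> \<int>\<^sub>\<le>\<^sub>0"
    and "\<And>s. s \<in> set ss \<Longrightarrow> s + of_nat n \<noteq> 0 \<and> 1 + s \<notin> \<int>\<^sub>\<le>\<^sub>0"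
  shows "hypergeom_term (v # (1 + v/2) # ss) (v/2 # map ((+) 1) ss) 1 n
    = pochhammer v n / fact n * ((v + 2 * of_nat n) / v) * (\<Prod>s\<leftarrow>ss. s / (s + of_nat n))"
proof -
  have "v / 2 \<noteq> 0" "pochhammer (v / 2) n \<noteq> 0"
    using assms(1) by (auto dest: pochhammer_eq_0_imp_nonpos_Int)
  then have "pochhammer (1 + v / 2) n / pochhammer (v / 2) n = (v / 2 + of_nat n) / (v / 2)"
    by (rule pochhammer_1_plus_div_pochhammer)
  also have "\<dots> = (v + 2 * of_nat n) / v"
    using \<open>v / 2 \<noteq> 0\<close> by (simp add: field_simps)
  finally have v_ratio: "pochhammer (1 + v / 2) n / pochhammer (v / 2) n = (v + 2 * of_nat n) / v" .
  have ss_ratio: "(\<Prod>s\<leftarrow>ss. pochhammer s n) / (\<Prod>s\<leftarrow>ss. pochhammer (1 + s) n)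
      = (\<Prod>s\<leftarrow>ss. s / (s + of_nat n))"
    using assms(2)
  proof (induction ss)
    case (Cons s ss)
    then have "pochhammer (1 + s) n \<noteq> 0"
      by (auto dest: pochhammer_eq_0_imp_nonpos_Int)
    with Cons show ?case
      by (simp add: pochhammer_div_pochhammer_1_plus flip: times_divide_times_eq)
  qed simp
  have "hypergeom_term (v # (1 + v/2) # ss) (v/2 # map ((+) 1) ss) 1 n
    = pochhammer v n / fact n * (pochhammer (1 + v / 2) n / pochhammer (v / 2) n)
      * ((\<Prod>s\<leftarrow>ss. pochhammer s n) / (\<Prod>s\<leftarrow>ss. pochhammer (1 + s) n))"
    by (simp add: hypergeom_term_def comp_def times_divide_times_eq mult_ac)
  then show ?thesis
    unfolding v_ratio ss_ratio .
qed

lemma hypergeom_term_well_poised_scaled: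
  fixes v c :: complex and us :: "complex list"
  assumes "c \<noteq> 0" "v / 2 \<notin> \<int>\<^sub>\<le>\<^sub>0"
    and "\<And>u. u \<in> set us \<Longrightarrow> u + 2 * of_nat n * c \<noteq> 0 \<and> 1 + u / (2 * c) \<notin> \<int>\<^sub>\<le>\<^sub>0"
  defines "ss \<equiv> map (\<lambda>u. u / (2 * c)) us"
  shows "hypergeom_term (v # (1 + v/2) # ss) (v/2 # map ((+) 1) ss) 1 n
    = pochhammer v n / fact n * ((v + 2 * of_nat n) / v) * (\<Prod>u\<leftarrow>us. u / (u + 2 * of_nat n * c))"
proof -
  have shift: "u / (2 * c) + of_nat n = (u + 2 * of_nat n * c) / (2 * c)" for u
    using assms(1) by (simp add: field_simps)
  have ratio: "(x / (2 * c)) / (y / (2 * c)) = x / y" for x y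
    using assms(1) by (cases "y = 0") (simp_all add: field_simps)
  have "s + of_nat n \<noteq> 0 \<and> 1 + s \<notin> \<int>\<^sub>\<le>\<^sub>0" if "s \<in> set ss" for s
    using that assms(1,3) by (auto simp: ss_def shift)
  then have "hypergeom_term (v # (1 + v/2) # ss) (v/2 # map ((+) 1) ss) 1 n
      = pochhammer v n / fact n * ((v + 2 * of_nat n) / v) * (\<Prod>s\<leftarrow>ss. s / (s + of_nat n))"
    by (rule hypergeom_term_well_poised[OF assms(2)])
  also have "(\<Prod>s\<leftarrow>ss. s / (s + of_nat n)) = (\<Prod>u\<leftarrow>us. u / (u + 2 * of_nat n * c))"
    using assms(1) by (simp add: ss_def comp_def shift ratio)
  finally show ?thesis .
qed

lemma sinh_sinh_laplace_series_term_eq_hypergeom_term: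
  fixes v a b c :: complex
  assumes "Re c > 0"
    and "Re (v * c + a + b) > 0" "Re (v * c + a - b) > 0"
    and "Re (v * c - a + b) > 0" "Re (v * c - a - b) > 0"
    and "v / 2 \<notin> \<int>\<^sub>\<le>\<^sub>0"
    and "1 + (v/2 - a/(2*c) - b/(2*c)) \<notin> \<int>\<^sub>\<le>\<^sub>0"
    and "1 + (v/2 - a/(2*c) + b/(2*c)) \<notin> \<int>\<^sub>\<le>\<^sub>0"
    and "1 + (v/2 + a/(2*c) + b/(2*c)) \<notin> \<int>\<^sub>\<le>\<^sub>0"
    and "1 + (v/2 + a/(2*c) - b/(2*c)) \<notin> \<int>\<^sub>\<le>\<^sub>0"
  defines "s3 \<equiv> v/2 - a/(2*c) - b/(2*c)" and "s4 \<equiv> v/2 - a/(2*c) + b/(2*c)"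
    and "s5 \<equiv> v/2 + a/(2*c) + b/(2*c)" and "s6 \<equiv> v/2 + a/(2*c) - b/(2*c)"
    and "P \<equiv> (v * c - a - b) * (v * c + a + b) * (v * c - a + b) * (v * c + a - b)"
  shows "2 powr v * (pochhammer v k / fact k) * sinh_sinh_laplace a b ((v + 2 * of_nat k) * c)
    = 2 powr (v + 1) * v * a * b * c / P *
      hypergeom_term [v, 1 + v/2, s3, s5, s4, s6] [v/2, 1 + s3, 1 + s5, 1 + s4, 1 + s6] 1 k"
proof -
  define us where "us = [v * c - a - b, v * c + a + b, v * c - a + b, v * c + a - b]"
  define D where "D = (\<Prod>u\<leftarrow>us. u + 2 * of_nat k * c)"
  have "c \<noteq> 0" "v \<noteq> 0"
    using assms(1,6) by auto
  have ss: "map (\<lambda>u. u / (2 * c)) us = [s3, s5, s4, s6]"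
    using \<open>c \<noteq> 0\<close> by (simp add: us_def s3_def s4_def s5_def s6_def field_simps)
  have Re_pos: "Re (u + 2 * of_nat n * c) > 0" if "u \<in> set us" for u n
  proof -
    have "Re (u + 2 * of_nat n * c) = Re u + 2 * real n * Re c"
      by simp
    moreover have "Re u > 0"
      using that assms(2-5) by (auto simp: us_def)
    ultimately show ?thesis
      using assms(1) by (simp add: add_pos_nonneg)
  qed
  have nonzero: "u + 2 * of_nat n * c \<noteq> 0" if "u \<in> set us" for u n
    using Re_pos[OF that, of n] by (metis zero_complex.sel(1) less_irrefl)
  have "1 + u / (2 * c) \<notin> \<int>\<^sub>\<le>\<^sub>0" if "u \<in> set us" for u
  proof -
    have "u / (2 * c) \<in> set [s3, s5, s4, s6]"
      using that unfolding ss[symmetric] by auto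
    then show ?thesis
      using assms(7-10) unfolding s3_def s4_def s5_def s6_def by auto
  qed
  with nonzero have "hypergeom_term [v, 1 + v/2, s3, s5, s4, s6] [v/2, 1 + s3, 1 + s5, 1 + s4, 1 + s6] 1 k
      = pochhammer v k / fact k * ((v + 2 * of_nat k) / v) * (\<Prod>u\<leftarrow>us. u / (u + 2 * of_nat k * c))"
    using hypergeom_term_well_poised_scaled[OF \<open>c \<noteq> 0\<close> assms(6), of us k] by (simp add: ss)
  also have "(\<Prod>u\<leftarrow>us. u / (u + 2 * of_nat k * c)) = P / D"
    unfolding P_def D_def us_def by (simp only: list.map prod_list.Cons prod_list.Nil times_divide_times_eq mult.assoc mult_1_right)
  finally have hypergeom_term_eq: "hypergeom_term [v, 1 + v/2, s3, s5, s4, s6]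
      [v/2, 1 + s3, 1 + s5, 1 + s4, 1 + s6] 1 k = pochhammer v k / fact k * ((v + 2 * of_nat k) / v) * (P / D)" .
  have "P \<noteq> 0"
    using nonzero[of "v * c - a - b" 0] nonzero[of "v * c + a + b" 0]
      nonzero[of "v * c - a + b" 0] nonzero[of "v * c + a - b" 0]
    unfolding P_def by (simp add: us_def)
  have D: "((v + 2 * of_nat k) * c - a - b) * ((v + 2 * of_nat k) * c + a + b)
      * ((v + 2 * of_nat k) * c - a + b) * ((v + 2 * of_nat k) * c + a - b) = D"
    unfolding D_def us_def by simp algebra
  have rearrange: "E * X * (2 * a * b * ((V + K) * c) / Y)
      = E * 2 * V * a * b * c / Q * (X * ((V + K) / V) * (Q / Y))"
    if "V \<noteq> 0" "Q \<noteq> 0" for E X V K Y Q :: complex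
    using that by (cases "Y = 0") (simp_all add: field_simps)
  have "(2::complex) powr (v + 1) = 2 powr v * 2"
    by (simp add: powr_add)
  then show ?thesis
    unfolding hypergeom_term_eq sinh_sinh_laplace_def D
    by (simp only: rearrange[OF \<open>v \<noteq> 0\<close> \<open>P \<noteq> 0\<close>])
qed

lemma sums_mult_imp_eq_mult_suminf:
  fixes c :: "'a::{real_normed_field}"
  assumes "(\<lambda>n. c * f n) sums s"
  shows "s = c * suminf f"
proof (cases "c = 0")
  case True
  with assms show ?thesis
    by (simp add: sums_iff)
next
  case False
  with assms have "f sums (s / c)"
    by (rule sums_mult_D)
  with False show ?thesis
    by (simp add: sums_iff)
qed

theorem mainTheorem14:
  fixes v a b c :: complex
  assumes "Re v < 3" "Re c > 0"
    and "Re (v * c + a + b) > 0" "Re (v * c + a - b) > 0"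
    and "Re (v * c - a + b) > 0" "Re (v * c - a - b) > 0"
    and "v / 2 \<notin> \<int>\<^sub>\<le>\<^sub>0"
    and "1 + (v/2 - a/(2*c) - b/(2*c)) \<notin> \<int>\<^sub>\<le>\<^sub>0"
    and "1 + (v/2 - a/(2*c) + b/(2*c)) \<notin> \<int>\<^sub>\<le>\<^sub>0"
    and "1 + (v/2 + a/(2*c) + b/(2*c)) \<notin> \<int>\<^sub>\<le>\<^sub>0"
    and "1 + (v/2 + a/(2*c) - b/(2*c)) \<notin> \<int>\<^sub>\<le>\<^sub>0"
  shows "let s3 = v/2 - a/(2*c) - b/(2*c); s4 = v/2 - a/(2*c) + b/(2*c);
             s5 = v/2 + a/(2*c) + b/(2*c); s6 = v/2 + a/(2*c) - b/(2*c);
             P = (v * c - a - b) * (v * c + a + b) * (v * c - a + b) * (v * c + a - b)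
         in ((\<lambda>x::real. sinh (a * of_real x) * sinh (b * of_real x) / sinh_pow v c x)
              has_integral
              (2 powr (v + 1) * v * a * b * c / P *
               hypergeom [v, 1 + v/2, s3, s5, s4, s6] [v/2, 1 + s3, 1 + s5, 1 + s4, 1 + s6] 1))
            {0<..}"
proof -
  define s3 where "s3 = v/2 - a/(2*c) - b/(2*c)"
  define s4 where "s4 = v/2 - a/(2*c) + b/(2*c)"
  define s5 where "s5 = v/2 + a/(2*c) + b/(2*c)"
  define s6 where "s6 = v/2 + a/(2*c) - b/(2*c)"
  define P where "P = (v * c - a - b) * (v * c + a + b) * (v * c - a + b) * (v * c + a - b)"
  define F where "F = (\<lambda>x::real. sinh (a * of_real x) * sinh (b * of_real x) / sinh_pow v c x)"
  define h where "h = hypergeom_term [v, 1 + v/2, s3, s5, s4, s6] [v/2, 1 + s3, 1 + s5, 1 + s4, 1 + s6] 1"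
  have "\<bar>Re a\<bar> + \<bar>Re b\<bar> < Re (v * c)"
    using assms(3-6) by (simp add: abs_if)
  note series = sinh_mult_sinh_div_sinh_pow_series[OF assms(1,2) this, folded F_def]
  note term_eq = sinh_sinh_laplace_series_term_eq_hypergeom_term[OF assms(2-11),
      folded s3_def s4_def s5_def s6_def P_def, folded h_def]
  have "(\<lambda>k. 2 powr (v + 1) * v * a * b * c / P * h k) sums integral {0<..} F"
    using series(2) unfolding term_eq .
  then have "integral {0<..} F = 2 powr (v + 1) * v * a * b * c / P * suminf h"
    by (rule sums_mult_imp_eq_mult_suminf)
  moreover have "(F has_integral integral {0<..} F) {0<..}"
    using set_lebesgue_integral_eq_integral(1)[OF series(1)] by (rule integrable_integral)
  ultimately show ?thesis
    unfolding Let_def hypergeom_eq_suminf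
    by (simp only: s3_def[symmetric] s4_def[symmetric] s5_def[symmetric] s6_def[symmetric]
        P_def[symmetric] F_def[symmetric] h_def[symmetric])
qed

end
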